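(* Let $\mu$ be a finite measure on $\mathbb{N}_+$ with $\mu(n)\sim b(\log n)^\alpha n^{-2}$ as $n\to\infty$ for constants $b>0,\alpha>0$. Then as $n\to\infty$, $$\mathcal{L}^f\Big(\frac{1}{\log\log(\cdot+10)}\Big)(n)\le-\frac{\Phi_\mu(n)}{(n+10)\log(n+10)(\log\log(n+10))^2}-\Big(2\log2-\frac12\Big)\frac{b(\log n)^{\alpha-1}}{(\log\log n)^2}+o\Big(\frac{(\log n)^{\alpha-1}}{(\log\log n)^2}\Big).$$
   Context: $\mathbb{N}_+=\{1,2,\dots\}$, $\mu(k):=\mu(\{k\})$, $\Phi_\mu(n)=n\sum_{k=1}^n k\mu(k)$. For $g:\mathbb{N}_+\to\mathbb{R}$ with $\sum_k|g(n+k)|\mu(k)<\infty$, the fragmentation operator is $\mathcal{L}^fg(n)=n\sum_{k=1}^\infty\mu(k)[g(n+k)-g(n)]$; here it is applied to $g(n)=1/\log\log(n+10)$. *)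

theory Defs
  imports "HOL-Analysis.Analysis" "HOL-Library.Landau_Symbols"
begin

text \<open>A finite measure on the positive integers is represented by its point masses
  mu k = mu({k}) for k \<ge> 1 (the value mu 0 is irrelevant and never used).\<close>

definition finite_measure_Npos :: "(nat \<Rightarrow> real) \<Rightarrow> bool" where
  "finite_measure_Npos mu \<longleftrightarrow> (\<forall>k\<ge>1. mu k \<ge> 0) \<and> summable (\<lambda>k. mu (Suc k))"

definition Phi :: "(nat \<Rightarrow> real) \<Rightarrow> nat \<Rightarrow> real" where
  "Phi mu n = real n * (\<Sum>k=1..n. real k * mu k)"

definition Lf :: "(nat \<Rightarrow> real) \<Rightarrow> (nat \<Rightarrow> real) \<Rightarrow> nat \<Rightarrow> real" where
  "Lf mu g n = real n * (\<Sum>j. mu (Suc j) * (g (n + Suc j) - g n))"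

definition gfun :: "nat \<Rightarrow> real" where
  "gfun n = 1 / ln (ln (real n + 10))"

end

theory Submission
  imports Defs "HOL-Real_Asymp.Real_Asymp"
begin

text \<open>Put \<open>N = n + 10\<close>, \<open>L = ln N\<close> and \<open>l\<^sub>k = ln (1 + k/N)\<close>. A second-order expansion of
  \<open>1 / ln ln\<close> gives \<open>gfun (n + k) - gfun n \<le> (3/2 l\<^sub>k\<^sup>2 / L - l\<^sub>k) / (L (ln L)\<^sup>2)\<close>, and since every
  term of \<open>Lf\<close> is nonpositive one may keep only \<open>k \<le> M n\<close>. For \<open>k \<le> n\<close>, \<open>l\<^sub>k \<approx> k/N\<close>: the linear
  part gives the \<open>Phi\<close> term and the quadratic part at most about \<open>b/2 (ln n)\<^sup>\<alpha>\<^sup>-\<^sup>1 / (ln ln n)\<^sup>2\<close>,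
  because \<open>\<Sum>\<^sub>k\<^sub>\<le>\<^sub>n mu k k\<^sup>2 \<approx> b n (ln n)\<^sup>\<alpha>\<close>. For \<open>n < k \<le> M n\<close>, \<open>mu k \<ge> (1 - e) b (ln n)\<^sup>\<alpha> / k\<^sup>2\<close>
  and \<open>n \<Sum> l\<^sub>k / k\<^sup>2\<close> is a Riemann sum for \<open>\<integral>\<^sub>1\<^sup>M ln (1 + s) / s\<^sup>2 ds\<close>, which tends to \<open>2 ln 2\<close>
  as \<open>M \<rightarrow> \<infinity>\<close>; the quadratic part of these terms is of smaller order. Letting \<open>e \<rightarrow> 0\<close> and
  \<open>M \<rightarrow> \<infinity>\<close> yields the coefficient \<open>1/2 - 2 ln 2\<close>.\<close>

lemma ln_add_one_ge_quadratic:
  fixes x :: real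
  assumes "x \<ge> 0"
  shows "x - x\<^sup>2 / 2 \<le> ln (1 + x)"
proof -
  let ?f = "\<lambda>t::real. ln (1 + t) - t + t\<^sup>2 / 2"
  have "?f 0 \<le> ?f x"
  proof (rule DERIV_nonneg_imp_increasing_open[OF assms])
    fix t :: real
    assume t: "0 < t" "t < x"
    have "DERIV ?f t :> 1 / (1 + t) - 1 + t"
      using t by (auto intro!: derivative_eq_intros)
    moreover have "1 / (1 + t) - 1 + t \<ge> 0"
      using t by (simp add: field_simps)
    ultimately show "\<exists>y. DERIV ?f t :> y \<and> y \<ge> 0" by blast
  qed (auto intro!: continuous_intros)
  then show ?thesis by simp
qed

lemma inverse_add_le_quadratic:
  fixes a v :: real
  assumes "a > 0" "v \<ge> 0"
  shows "1 / (a + v) - 1 / a \<le> v\<^sup>2 / a ^ 3 - v / a\<^sup>2"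
proof -
  have "1 / (a + v) - 1 / a - (v\<^sup>2 / a ^ 3 - v / a\<^sup>2) = - (v ^ 3 / (a ^ 3 * (a + v)))"
    using assms by (simp add: divide_simps) algebra
  moreover have "v ^ 3 / (a ^ 3 * (a + v)) \<ge> 0"
    using assms by simp
  ultimately show ?thesis by linarith
qed

lemma inverse_ln_ln_add_le:
  fixes N k :: real
  assumes N: "exp (exp 1) \<le> N" and k: "0 \<le> k"
  defines "l \<equiv> ln (1 + k / N)"
  shows "1 / ln (ln (N + k)) - 1 / ln (ln N) \<le> (3/2 * l\<^sup>2 / ln N - l) / (ln N * (ln (ln N))\<^sup>2)"
proof -
  define L where "L = ln N"
  define \<Lambda> where "\<Lambda> = ln L"
  define u where "u = l / L"
  define v where "v = ln (1 + u)"
  have N_pos: "N > 0" using N by (meson exp_gt_zero less_le_trans)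
  have L: "exp 1 \<le> L"
    unfolding L_def using N N_pos by (metis exp_gt_zero ln_exp ln_le_cancel_iff)
  then have L_pos: "L > 0" by (meson exp_gt_zero less_le_trans)
  have \<Lambda>: "1 \<le> \<Lambda>"
    unfolding \<Lambda>_def using L L_pos by (metis exp_gt_zero ln_exp ln_le_cancel_iff)
  have l: "l \<ge> 0" unfolding l_def using k N_pos by simp
  have u: "u \<ge> 0" unfolding u_def using l L_pos by simp
  have "N + k = N * (1 + k / N)" using N_pos by (simp add: field_simps)
  then have "ln (N + k) = L + l"
    unfolding L_def l_def using N_pos k by (simp add: ln_mult_pos add_pos_nonneg)
  also have "\<dots> = L * (1 + u)" unfolding u_def using L_pos by (simp add: field_simps)
  finally have "ln (ln (N + k)) = \<Lambda> + v"
    unfolding \<Lambda>_def v_def using L_pos u by (simp add: ln_mult)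
  then have "1 / ln (ln (N + k)) - 1 / ln (ln N) = 1 / (\<Lambda> + v) - 1 / \<Lambda>"
    unfolding \<Lambda>_def L_def by simp
  also have "\<dots> \<le> v\<^sup>2 / \<Lambda> ^ 3 - v / \<Lambda>\<^sup>2"
    using \<Lambda> u unfolding v_def by (intro inverse_add_le_quadratic) auto
  also have "\<dots> \<le> u\<^sup>2 / \<Lambda>\<^sup>2 - (u - u\<^sup>2 / 2) / \<Lambda>\<^sup>2"
  proof -
    have v_le: "v \<le> u" and v_ge: "u - u\<^sup>2 / 2 \<le> v"
      unfolding v_def using u by (auto simp: ln_add_one_self_le_self ln_add_one_ge_quadratic)
    have "v\<^sup>2 / \<Lambda> ^ 3 \<le> u\<^sup>2 / \<Lambda> ^ 3"
      using v_le u \<Lambda> unfolding v_def by (intro divide_right_mono power_mono) auto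
    also have "\<dots> \<le> u\<^sup>2 / \<Lambda>\<^sup>2"
      using \<Lambda> by (intro divide_left_mono) (auto simp: power_increasing)
    finally show ?thesis
      using v_ge \<Lambda> by (smt (verit) divide_right_mono zero_le_power2)
  qed
  also have "\<dots> = (3/2 * l\<^sup>2 / L - l) / (L * \<Lambda>\<^sup>2)"
    unfolding u_def using L_pos \<Lambda> by (simp add: field_simps power2_eq_square)
  finally show ?thesis unfolding L_def \<Lambda>_def .
qed

text \<open>\<open>log_tail_integral N x = \<integral>\<^sub>x\<^sup>\<infinity> ln (1 + t/N) / t\<^sup>2 dt\<close>; in particular
  \<open>log_tail_integral 1 1 - log_tail_integral 1 M = \<integral>\<^sub>1\<^sup>M ln (1 + s) / s\<^sup>2 ds\<close>.\<close>

definition log_tail_integral :: "real \<Rightarrow> real \<Rightarrow> real" where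
  "log_tail_integral N x = ln (1 + x / N) / x + (ln (N + x) - ln x) / N"

lemma log_tail_integral_has_real_derivative:
  assumes "N > 0" "t > 0"
  shows "(log_tail_integral N has_real_derivative - ln (1 + t / N) / t\<^sup>2) (at t)"
proof -
  have "(log_tail_integral N has_real_derivative
      ((1 / N) / (1 + t / N) * t - ln (1 + t / N)) / t\<^sup>2 + (1 / (N + t) - 1 / t) / N) (at t)"
    unfolding log_tail_integral_def using assms
    by (auto intro!: derivative_eq_intros simp: power2_eq_square add_pos_pos)
  moreover have "((1 / N) / (1 + t / N) * t - c) / t\<^sup>2 + (1 / (N + t) - 1 / t) / N = - c / t\<^sup>2" for c
  proof -
    have "(1 / N) / (1 + t / N) = 1 / (N + t)"
      using assms by (simp add: divide_simps)
    moreover have "t / (N + t) / t\<^sup>2 = 1 / (t * (N + t))"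
      using assms by (simp add: divide_simps power2_eq_square)
    moreover have "(1 / (N + t) - 1 / t) / N = - 1 / (t * (N + t))"
      using assms by (simp add: divide_simps)
    ultimately show ?thesis by (simp add: diff_divide_distrib)
  qed
  ultimately show ?thesis by simp
qed

lemma ln_one_plus_add_le:
  fixes N x :: real
  assumes "N > 0" "x \<ge> 0"
  shows "ln (1 + (x + 1) / N) \<le> ln (1 + x / N) + 1 / N"
proof -
  have "N + x > 0" using assms by linarith
  then have "1 + (x + 1) / N = (1 + x / N) * (1 + 1 / (N + x))"
    using assms by (simp add: divide_simps)
  then have "ln (1 + (x + 1) / N) = ln (1 + x / N) + ln (1 + 1 / (N + x))"
    using assms by (simp add: ln_mult_pos add_pos_nonneg)
  also have "ln (1 + 1 / (N + x)) \<le> 1 / (N + x)"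
    using assms by (intro ln_add_one_self_le_self) simp
  also have "1 / (N + x) \<le> 1 / N"
    using assms by (simp add: frac_le)
  finally show ?thesis by simp
qed

lemma log_tail_integral_decrement_le:
  assumes N: "N > 0" and x: "x \<ge> 1"
  shows "log_tail_integral N x - log_tail_integral N (x + 1) \<le> ln (1 + x / N) / x\<^sup>2 + 1 / (N * x\<^sup>2)"
proof -
  obtain z where z: "x < z" "z < x + 1"
    and mvt: "log_tail_integral N (x + 1) - log_tail_integral N x = (x + 1 - x) * (- ln (1 + z / N) / z\<^sup>2)"
    using MVT2[of x "x + 1" "log_tail_integral N" "\<lambda>t. - ln (1 + t / N) / t\<^sup>2"]
      log_tail_integral_has_real_derivative[OF N] x by auto
  have "log_tail_integral N x - log_tail_integral N (x + 1) = ln (1 + z / N) / z\<^sup>2"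
    using mvt by simp
  also have "\<dots> \<le> ln (1 + (x + 1) / N) / z\<^sup>2"
    using z N x by (intro divide_right_mono) (auto simp: divide_right_mono add_pos_nonneg)
  also have "\<dots> \<le> ln (1 + (x + 1) / N) / x\<^sup>2"
    using z N x by (intro divide_left_mono) (auto simp: power_mono add_pos_nonneg)
  also have "\<dots> \<le> (ln (1 + x / N) + 1 / N) / x\<^sup>2"
    using ln_one_plus_add_le[OF N] x by (intro divide_right_mono) auto
  also have "\<dots> = ln (1 + x / N) / x\<^sup>2 + 1 / (N * x\<^sup>2)"
    using N x by (simp add: field_simps)
  finally show ?thesis .
qed

lemma sum_inverse_squares_le:
  assumes "n \<ge> 1"
  shows "(\<Sum>k=n+1..n+d. 1 / (real k)\<^sup>2) \<le> 1 / real n - 1 / real (n + d)"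
proof (induction d)
  case 0
  then show ?case by simp
next
  case (Suc d)
  define a where "a = real (n + d)"
  have a: "a \<ge> 1" unfolding a_def using assms by simp
  have "1 / (a + 1)\<^sup>2 \<le> 1 / (a * (a + 1))"
    using a by (intro divide_left_mono) (auto simp: power2_eq_square)
  also have "\<dots> = 1 / a - 1 / (a + 1)"
    using a by (simp add: field_simps)
  finally have step: "1 / (a + 1)\<^sup>2 \<le> 1 / a - 1 / (a + 1)" .
  have succ: "real (n + Suc d) = a + 1" unfolding a_def by simp
  have "(\<Sum>k=n+1..n+Suc d. 1 / (real k)\<^sup>2) = (\<Sum>k=n+1..n+d. 1 / (real k)\<^sup>2) + 1 / (a + 1)\<^sup>2"
    unfolding succ[symmetric] by simp
  also have "\<dots> \<le> 1 / real n - 1 / a + 1 / (a + 1)\<^sup>2"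
    using Suc.IH unfolding a_def by simp
  finally show ?case unfolding succ using step by linarith
qed

lemma log_tail_integral_diff_le_sum:
  assumes N: "N > 0" and n: "n \<ge> 1"
  shows "log_tail_integral N (real n + 1) - log_tail_integral N (real (n + d) + 1) - 1 / (N * real n)
     \<le> (\<Sum>k=n+1..n+d. ln (1 + real k / N) / (real k)\<^sup>2)"
proof -
  let ?F = "\<lambda>k. log_tail_integral N (real k)"
  have "?F (n + 1) - ?F (n + d + 1) = (\<Sum>k=n+1..n+d. ?F k - ?F (Suc k))"
    using sum_Suc_diff[of "n + 1" "n + d" "\<lambda>k. - ?F k"] by (simp add: add.commute)
  also have "\<dots> \<le> (\<Sum>k=n+1..n+d. ln (1 + real k / N) / (real k)\<^sup>2 + 1 / N * (1 / (real k)\<^sup>2))"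
  proof (rule sum_mono)
    fix k assume "k \<in> {n+1..n+d}"
    then have "real k \<ge> 1" by simp
    from log_tail_integral_decrement_le[OF N this]
    show "?F k - ?F (Suc k) \<le> ln (1 + real k / N) / (real k)\<^sup>2 + 1 / N * (1 / (real k)\<^sup>2)"
      by (simp add: add.commute)
  qed
  also have "\<dots> = (\<Sum>k=n+1..n+d. ln (1 + real k / N) / (real k)\<^sup>2) + 1 / N * (\<Sum>k=n+1..n+d. 1 / (real k)\<^sup>2)"
    by (simp add: sum.distrib sum_distrib_left)
  also have "(\<Sum>k=n+1..n+d. 1 / (real k)\<^sup>2) \<le> 1 / real n"
    using sum_inverse_squares_le[OF n, of d] by (smt (verit) of_nat_0_le_iff divide_nonneg_nonneg)
  then have "1 / N * (\<Sum>k=n+1..n+d. 1 / (real k)\<^sup>2) \<le> 1 / N * (1 / real n)"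
    using N by (intro mult_left_mono) auto
  finally show ?thesis by (simp add: add.commute)
qed

lemma one_lt_ln_add_10: "1 < ln (real n + 10)"
proof -
  have "exp 1 < real n + 10" using exp_le by linarith
  then show ?thesis by (metis exp_gt_zero ln_exp ln_less_cancel_iff less_trans)
qed

lemma gfun_pos: "gfun n > 0"
  using one_lt_ln_add_10[of n] unfolding gfun_def by simp

lemma gfun_antimono:
  assumes "m \<le> n"
  shows "gfun n \<le> gfun m"
proof -
  have "0 < ln (ln (real m + 10))" using one_lt_ln_add_10[of m] by simp
  moreover have "ln (ln (real m + 10)) \<le> ln (ln (real n + 10))"
    using one_lt_ln_add_10[of m] assms by simp
  ultimately show ?thesis unfolding gfun_def by (simp add: frac_le)
qed

lemma Lf_gfun_le_partial_sum:
  assumes "finite_measure_Npos mu"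
  shows "Lf mu gfun n \<le> real n * (\<Sum>k=1..m. mu k * (gfun (n + k) - gfun n))"
proof -
  define t where "t j = mu (Suc j) * (gfun (n + Suc j) - gfun n)" for j
  have mu_nonneg: "mu (Suc j) \<ge> 0" and mu_summable: "summable (\<lambda>j. mu (Suc j))" for j
    using assms unfolding finite_measure_Npos_def by auto
  have t_nonpos: "t j \<le> 0" for j
    unfolding t_def using mu_nonneg[of j] gfun_antimono[of n "n + Suc j"]
    by (simp add: mult_nonneg_nonpos)
  have "norm (t j) \<le> mu (Suc j) * gfun n" for j
    unfolding t_def using mu_nonneg[of j] gfun_antimono[of n "n + Suc j"] gfun_pos[of "n + Suc j"]
    by (simp add: abs_mult mult_left_mono)
  then have "summable t"
    by (intro summable_comparison_test'[OF summable_mult2[OF mu_summable]]) auto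
  then have "suminf t = (\<Sum>j. t (j + m)) + (\<Sum>j<m. t j)"
    by (rule suminf_split_initial_segment)
  moreover have "(\<Sum>j. t (j + m)) \<le> (\<Sum>j::nat. 0)"
    using \<open>summable t\<close> t_nonpos by (intro suminf_le) (auto simp: summable_iff_shift)
  ultimately have "suminf t \<le> (\<Sum>j<m. t j)" by simp
  also have "\<dots> = (\<Sum>k=1..m. mu k * (gfun (n + k) - gfun n))"
    unfolding t_def by (simp add: sum.atLeast1_atMost_eq)
  finally show ?thesis
    unfolding Lf_def t_def[symmetric] by (intro mult_left_mono) auto
qed

lemma Lf_gfun_le_quadratic_sum:
  assumes "finite_measure_Npos mu" and n: "exp (exp 1) \<le> real n + 10"
  defines "N \<equiv> real n + 10"
  defines "L \<equiv> ln N"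
  defines "c \<equiv> real n / (L * (ln L)\<^sup>2)"
  shows "Lf mu gfun n \<le> (\<Sum>k=1..m. mu k * (c * (3/2 * (ln (1 + real k / N))\<^sup>2 / L - ln (1 + real k / N))))"
proof -
  have "Lf mu gfun n \<le> (\<Sum>k=1..m. mu k * (real n * (gfun (n + k) - gfun n)))"
    using Lf_gfun_le_partial_sum[OF assms(1), of n m] by (simp add: sum_distrib_left algebra_simps)
  also have "\<dots> \<le> (\<Sum>k=1..m. mu k * (c * (3/2 * (ln (1 + real k / N))\<^sup>2 / L - ln (1 + real k / N))))"
  proof (rule sum_mono)
    fix k assume "k \<in> {1..m}"
    then have "mu k \<ge> 0" using assms(1) unfolding finite_measure_Npos_def by auto
    have "gfun (n + k) - gfun n = 1 / ln (ln (N + real k)) - 1 / ln (ln N)"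
      unfolding gfun_def N_def by (simp add: algebra_simps)
    also have "\<dots> \<le> (3/2 * (ln (1 + real k / N))\<^sup>2 / L - ln (1 + real k / N)) / (L * (ln L)\<^sup>2)"
      using inverse_ln_ln_add_le[of N "real k"] n unfolding L_def N_def by simp
    finally have "real n * (gfun (n + k) - gfun n)
        \<le> c * (3/2 * (ln (1 + real k / N))\<^sup>2 / L - ln (1 + real k / N))"
      unfolding c_def by (metis mult_left_mono of_nat_0_le_iff times_divide_eq_left times_divide_eq_right)
    with \<open>mu k \<ge> 0\<close> show "mu k * (real n * (gfun (n + k) - gfun n))
        \<le> mu k * (c * (3/2 * (ln (1 + real k / N))\<^sup>2 / L - ln (1 + real k / N)))"
      by (rule mult_left_mono[rotated])
  qed
  finally show ?thesis .
qed

lemma quadratic_sum_head_le: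
  fixes c L N :: real and A :: "nat set"
  assumes c: "c \<ge> 0" and L: "L > 0" and N: "N > 0" and mu: "\<And>k. k \<in> A \<Longrightarrow> mu k \<ge> 0"
  shows "(\<Sum>k\<in>A. mu k * (c * (3/2 * (ln (1 + real k / N))\<^sup>2 / L - ln (1 + real k / N))))
    \<le> c / N\<^sup>2 * (1/2 + 3 / (2 * L)) * (\<Sum>k\<in>A. mu k * (real k)\<^sup>2) - c / N * (\<Sum>k\<in>A. real k * mu k)"
proof -
  have "(\<Sum>k\<in>A. mu k * (c * (3/2 * (ln (1 + real k / N))\<^sup>2 / L - ln (1 + real k / N))))
      \<le> (\<Sum>k\<in>A. mu k * (c * (3/2 * (real k / N)\<^sup>2 / L - (real k / N - (real k / N)\<^sup>2 / 2))))"
  proof (rule sum_mono)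
    fix k assume "k \<in> A"
    define x where "x = real k / N"
    have x: "x \<ge> 0" unfolding x_def using N by simp
    then have "(ln (1 + x))\<^sup>2 \<le> x\<^sup>2"
      by (intro power_mono ln_add_one_self_le_self) auto
    then have "3/2 * (ln (1 + x))\<^sup>2 / L \<le> 3/2 * x\<^sup>2 / L"
      using L by (intro divide_right_mono) auto
    then have "3/2 * (ln (1 + x))\<^sup>2 / L - ln (1 + x) \<le> 3/2 * x\<^sup>2 / L - (x - x\<^sup>2 / 2)"
      using ln_add_one_ge_quadratic[OF x] by linarith
    then show "mu k * (c * (3/2 * (ln (1 + real k / N))\<^sup>2 / L - ln (1 + real k / N)))
        \<le> mu k * (c * (3/2 * (real k / N)\<^sup>2 / L - (real k / N - (real k / N)\<^sup>2 / 2)))"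
      using c mu[OF \<open>k \<in> A\<close>] unfolding x_def by (intro mult_left_mono) auto
  qed
  also have "\<dots> = (\<Sum>k\<in>A. c / N\<^sup>2 * (1/2 + 3 / (2 * L)) * (mu k * (real k)\<^sup>2) - c / N * (real k * mu k))"
    using N L by (intro sum.cong) (auto simp: field_simps power2_eq_square)
  also have "\<dots> = c / N\<^sup>2 * (1/2 + 3 / (2 * L)) * (\<Sum>k\<in>A. mu k * (real k)\<^sup>2) - c / N * (\<Sum>k\<in>A. real k * mu k)"
    by (simp add: sum_subtractf sum_distrib_left)
  finally show ?thesis .
qed

lemma mass_times_quadratic_le:
  fixes m l s L lo hi B :: real
  assumes L: "L > 0" and s: "s > 0" and m: "lo / s \<le> m" "m \<le> hi / s"
    and l: "0 \<le> l" "l \<le> B" and hi: "hi \<ge> 0"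
  shows "m * (3/2 * l\<^sup>2 / L - l) \<le> 3/2 * hi * B\<^sup>2 / L * (1 / s) - lo * (l / s)"
proof -
  have "m * l\<^sup>2 \<le> hi / s * B\<^sup>2"
    using m l hi s by (intro mult_mono power_mono) auto
  then have "3/2 * (m * l\<^sup>2) / L \<le> 3/2 * (hi / s * B\<^sup>2) / L"
    using L by (intro divide_right_mono) auto
  moreover have "lo / s * l \<le> m * l"
    using m l by (intro mult_right_mono) auto
  ultimately have "m * (3/2 * l\<^sup>2 / L - l) \<le> 3/2 * (hi / s * B\<^sup>2) / L - lo / s * l"
    by (simp add: right_diff_distrib)
  then show ?thesis by (simp add: field_simps)
qed

lemma quadratic_sum_tail_le:
  fixes c L N lo hi B :: real
  assumes c: "c \<ge> 0" and L: "L > 0" and N: "N > 0" and n: "n \<ge> 1"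
    and lo: "lo \<ge> 0" and hi: "hi \<ge> 0"
    and mu: "\<And>k. n < k \<Longrightarrow> k \<le> n + d \<Longrightarrow> lo / (real k)\<^sup>2 \<le> mu k \<and> mu k \<le> hi / (real k)\<^sup>2"
    and B: "\<And>k. n < k \<Longrightarrow> k \<le> n + d \<Longrightarrow> ln (1 + real k / N) \<le> B"
  shows "(\<Sum>k=n+1..n+d. mu k * (c * (3/2 * (ln (1 + real k / N))\<^sup>2 / L - ln (1 + real k / N))))
    \<le> c * (3/2 * hi * B\<^sup>2 / (L * real n) - lo * (log_tail_integral N (real n + 1)
          - log_tail_integral N (real (n + d) + 1) - 1 / (N * real n)))"
proof -
  let ?l = "\<lambda>k. ln (1 + real k / N)"
  have "(\<Sum>k=n+1..n+d. mu k * (c * (3/2 * (?l k)\<^sup>2 / L - ?l k)))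
      \<le> (\<Sum>k=n+1..n+d. c * (3/2 * hi * B\<^sup>2 / L * (1 / (real k)\<^sup>2) - lo * (?l k / (real k)\<^sup>2)))"
  proof (rule sum_mono)
    fix k assume "k \<in> {n+1..n+d}"
    then have k: "n < k" "k \<le> n + d" by auto
    have "mu k * (3/2 * (?l k)\<^sup>2 / L - ?l k) \<le> 3/2 * hi * B\<^sup>2 / L * (1 / (real k)\<^sup>2) - lo * (?l k / (real k)\<^sup>2)"
      using mu[OF k] B[OF k] N L hi k by (intro mass_times_quadratic_le) auto
    then show "mu k * (c * (3/2 * (?l k)\<^sup>2 / L - ?l k))
        \<le> c * (3/2 * hi * B\<^sup>2 / L * (1 / (real k)\<^sup>2) - lo * (?l k / (real k)\<^sup>2))"
      using c by (simp add: mult.left_commute mult_left_mono)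
  qed
  also have "\<dots> = c * (3/2 * hi * B\<^sup>2 / L * (\<Sum>k=n+1..n+d. 1 / (real k)\<^sup>2) - lo * (\<Sum>k=n+1..n+d. ?l k / (real k)\<^sup>2))"
    by (simp only: sum_distrib_left[symmetric] sum_subtractf[symmetric]) (simp add: sum_distrib_left sum_subtractf)
  also have "\<dots> \<le> c * (3/2 * hi * B\<^sup>2 / L * (1 / real n) - lo * (log_tail_integral N (real n + 1)
          - log_tail_integral N (real (n + d) + 1) - 1 / (N * real n)))"
  proof -
    have "(\<Sum>k=n+1..n+d. 1 / (real k)\<^sup>2) \<le> 1 / real n"
      using sum_inverse_squares_le[OF n, of d] by (smt (verit) of_nat_0_le_iff divide_nonneg_nonneg)
    then show ?thesis
      using log_tail_integral_diff_le_sum[OF N n, of d] c L lo hi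
      by (intro mult_left_mono diff_mono mult_left_mono) auto
  qed
  also have "\<dots> = c * (3/2 * hi * B\<^sup>2 / (L * real n) - lo * (log_tail_integral N (real n + 1)
          - log_tail_integral N (real (n + d) + 1) - 1 / (N * real n)))"
    by simp
  finally show ?thesis .
qed

lemma mu_bounds_on_interval:
  fixes mu :: "nat \<Rightarrow> real"
  assumes e: "0 \<le> e" "e \<le> 1" and b: "b > 0" and \<alpha>: "\<alpha> > 0"
    and mu: "\<And>k. k0 \<le> k \<Longrightarrow> (1 - e) * (b * ln (real k) powr \<alpha> / (real k)\<^sup>2) \<le> mu k
      \<and> mu k \<le> (1 + e) * (b * ln (real k) powr \<alpha> / (real k)\<^sup>2)"
    and k: "k0 \<le> j" "1 \<le> j" "j \<le> k" "k \<le> m"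
  shows "(1 - e) * b * ln (real j) powr \<alpha> / (real k)\<^sup>2 \<le> mu k
    \<and> mu k \<le> (1 + e) * b * ln (real m) powr \<alpha> / (real k)\<^sup>2"
proof -
  have "(1 - e) * b * ln (real j) powr \<alpha> \<le> (1 - e) * b * ln (real k) powr \<alpha>"
    using e b \<alpha> k by (intro mult_left_mono powr_mono2) auto
  then have "(1 - e) * b * ln (real j) powr \<alpha> / (real k)\<^sup>2 \<le> (1 - e) * (b * ln (real k) powr \<alpha> / (real k)\<^sup>2)"
    by (simp add: divide_right_mono)
  moreover have "(1 + e) * b * ln (real k) powr \<alpha> \<le> (1 + e) * b * ln (real m) powr \<alpha>"
    using e b \<alpha> k by (intro mult_left_mono powr_mono2) auto
  then have "(1 + e) * (b * ln (real k) powr \<alpha> / (real k)\<^sup>2) \<le> (1 + e) * b * ln (real m) powr \<alpha> / (real k)\<^sup>2"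
    by (simp add: divide_right_mono)
  ultimately show ?thesis
    using mu[of k] k by linarith
qed

lemma sum_mass_times_square_le:
  fixes mu :: "nat \<Rightarrow> real"
  assumes e: "0 \<le> e" "e \<le> 1" and b: "b > 0" and \<alpha>: "\<alpha> > 0"
    and mu: "\<And>k. k0 \<le> k \<Longrightarrow> (1 - e) * (b * ln (real k) powr \<alpha> / (real k)\<^sup>2) \<le> mu k
      \<and> mu k \<le> (1 + e) * (b * ln (real k) powr \<alpha> / (real k)\<^sup>2)"
    and n: "k0 \<le> n"
  shows "(\<Sum>k=1..n. mu k * (real k)\<^sup>2)
    \<le> (\<Sum>k=1..k0. mu k * (real k)\<^sup>2) + real n * ((1 + e) * b * ln (real n) powr \<alpha>)"
proof -
  have "(\<Sum>k=1..n. mu k * (real k)\<^sup>2) = (\<Sum>k=1..k0. mu k * (real k)\<^sup>2) + (\<Sum>k=k0+1..n. mu k * (real k)\<^sup>2)"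
    using n sum.ub_add_nat[of 1 k0 _ "n - k0"] by simp
  also have "(\<Sum>k=k0+1..n. mu k * (real k)\<^sup>2) \<le> real (card {k0+1..n}) * ((1 + e) * b * ln (real n) powr \<alpha>)"
  proof (rule sum_bounded_above)
    fix k assume k: "k \<in> {k0+1..n}"
    then have "mu k \<le> (1 + e) * b * ln (real n) powr \<alpha> / (real k)\<^sup>2"
      using mu_bounds_on_interval[where j = k and k = k and m = n, OF e b \<alpha> mu] by auto
    with k show "mu k * (real k)\<^sup>2 \<le> (1 + e) * b * ln (real n) powr \<alpha>"
      by (simp add: pos_le_divide_eq)
  qed
  also have "\<dots> \<le> real n * ((1 + e) * b * ln (real n) powr \<alpha>)"
    using e b by (intro mult_right_mono) auto
  finally show ?thesis by simp
qed

lemma quadratic_sum_tail_le_ln_powr: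
  fixes mu :: "nat \<Rightarrow> real" and c L N :: real
  assumes c: "c \<ge> 0" and L: "L > 0" and N: "real n \<le> N" "N > 0"
    and e: "0 \<le> e" "e \<le> 1" and b: "b > 0" and \<alpha>: "\<alpha> > 0"
    and mu: "\<And>k. k0 \<le> k \<Longrightarrow> (1 - e) * (b * ln (real k) powr \<alpha> / (real k)\<^sup>2) \<le> mu k
      \<and> mu k \<le> (1 + e) * (b * ln (real k) powr \<alpha> / (real k)\<^sup>2)"
    and n: "k0 \<le> n" "1 \<le> n" and M: "M \<ge> 1"
  shows "(\<Sum>k=n+1..M*n. mu k * (c * (3/2 * (ln (1 + real k / N))\<^sup>2 / L - ln (1 + real k / N))))
    \<le> c * (3/2 * ((1 + e) * b * ln (real (M * n)) powr \<alpha>) * (ln (1 + real M))\<^sup>2 / (L * real n)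
      - (1 - e) * b * ln (real n) powr \<alpha> * (log_tail_integral N (real n + 1)
          - log_tail_integral N (real (M * n) + 1) - 1 / (N * real n)))"
proof -
  define d where "d = M * n - n"
  have nd: "n + d = M * n" unfolding d_def using M by simp
  have "(\<Sum>k=n+1..n+d. mu k * (c * (3/2 * (ln (1 + real k / N))\<^sup>2 / L - ln (1 + real k / N))))
    \<le> c * (3/2 * ((1 + e) * b * ln (real (M * n)) powr \<alpha>) * (ln (1 + real M))\<^sup>2 / (L * real n)
      - (1 - e) * b * ln (real n) powr \<alpha> * (log_tail_integral N (real n + 1)
          - log_tail_integral N (real (n + d) + 1) - 1 / (N * real n)))"
  proof (rule quadratic_sum_tail_le[OF c L N(2) n(2)])
    fix k assume k: "n < k" "k \<le> n + d"
    then show "(1 - e) * b * ln (real n) powr \<alpha> / (real k)\<^sup>2 \<le> mu k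
        \<and> mu k \<le> (1 + e) * b * ln (real (M * n)) powr \<alpha> / (real k)\<^sup>2"
      using mu_bounds_on_interval[where j = n and k = k and m = "M * n", OF e b \<alpha> mu] n nd by auto
    have "real k \<le> real M * real n"
      using k nd by (metis of_nat_le_iff of_nat_mult)
    also have "\<dots> \<le> real M * N" using N by (intro mult_left_mono) auto
    finally show "ln (1 + real k / N) \<le> ln (1 + real M)"
      using N by (simp add: pos_divide_le_eq add_pos_nonneg)
  qed (use e b in auto)
  then show ?thesis unfolding nd .
qed

text \<open>If \<open>mu k\<close> lies between \<open>(1 \<plusminus> e) b (ln k)\<^sup>\<alpha> / k\<^sup>2\<close> for \<open>k \<ge> k0\<close>, this bounds
  \<open>Lf mu gfun n\<close> plus the \<open>Phi\<close> term: the first summand comes from the masses at \<open>k \<le> n\<close>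
  (with \<open>K\<close> the contribution of those below \<open>k0\<close>), the other two from \<open>n < k \<le> M n\<close>;
  the masses beyond \<open>M n\<close> are dropped.\<close>

definition Lf_gfun_majorant :: "real \<Rightarrow> real \<Rightarrow> real \<Rightarrow> nat \<Rightarrow> real \<Rightarrow> nat \<Rightarrow> real" where
  "Lf_gfun_majorant b \<alpha> e M K n =
     real n / ((real n + 10)\<^sup>2 * ln (real n + 10) * (ln (ln (real n + 10)))\<^sup>2)
       * (1/2 + 3 / (2 * ln (real n + 10))) * (K + (1 + e) * b * real n * ln (real n) powr \<alpha>)
   - (1 - e) * b * ln (real n) powr \<alpha> * (real n / (ln (real n + 10) * (ln (ln (real n + 10)))\<^sup>2))
       * (log_tail_integral (real n + 10) (real n + 1) - log_tail_integral (real n + 10) (real (M * n) + 1)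
          - 1 / ((real n + 10) * real n))
   + (1 + e) * b * ln (real (M * n)) powr \<alpha>
       * (3/2 * (ln (1 + real M))\<^sup>2 / ((ln (real n + 10))\<^sup>2 * (ln (ln (real n + 10)))\<^sup>2))"

lemma Lf_gfun_le_majorant:
  fixes mu :: "nat \<Rightarrow> real" and b \<alpha> e :: real
  assumes fm: "finite_measure_Npos mu" and b: "b > 0" and \<alpha>: "\<alpha> > 0" and e: "0 \<le> e" "e \<le> 1"
    and M: "M \<ge> 1"
    and mu: "\<And>k. k0 \<le> k \<Longrightarrow> (1 - e) * (b * ln (real k) powr \<alpha> / (real k)\<^sup>2) \<le> mu k
      \<and> mu k \<le> (1 + e) * (b * ln (real k) powr \<alpha> / (real k)\<^sup>2)"
    and n: "k0 \<le> n" "1 \<le> n" "exp (exp 1) \<le> real n + 10"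
  shows "Lf mu gfun n + Phi mu n / ((real n + 10) * ln (real n + 10) * (ln (ln (real n + 10)))\<^sup>2)
    \<le> Lf_gfun_majorant b \<alpha> e M (\<Sum>k=1..k0. mu k * (real k)\<^sup>2) n"
proof -
  define N where "N = real n + 10"
  define L where "L = ln N"
  define c where "c = real n / (L * (ln L)\<^sup>2)"
  define Q where "Q k = mu k * (c * (3/2 * (ln (1 + real k / N))\<^sup>2 / L - ln (1 + real k / N)))" for k
  have N: "real n \<le> N" "N > 0" unfolding N_def by simp_all
  have L: "L > 1" unfolding L_def N_def by (rule one_lt_ln_add_10)
  have c: "c \<ge> 0" unfolding c_def using L by simp
  have "Lf mu gfun n \<le> (\<Sum>k=1..n + (M * n - n). Q k)"
    using Lf_gfun_le_quadratic_sum[OF fm n(3), of "M * n"] M unfolding Q_def c_def L_def N_def by simp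
  also have "\<dots> = (\<Sum>k=1..n. Q k) + (\<Sum>k=n+1..M * n. Q k)"
    using sum.ub_add_nat[of 1 n Q "M * n - n"] M by simp
  finally have "Lf mu gfun n \<le> (\<Sum>k=1..n. Q k) + (\<Sum>k=n+1..M * n. Q k)" .
  moreover have "(\<Sum>k=1..n. Q k) \<le> c / N\<^sup>2 * (1/2 + 3 / (2 * L)) * (\<Sum>k=1..n. mu k * (real k)\<^sup>2)
      - c / N * (\<Sum>k=1..n. real k * mu k)"
    unfolding Q_def using c L N fm unfolding finite_measure_Npos_def by (intro quadratic_sum_head_le) auto
  moreover have "c / N\<^sup>2 * (1/2 + 3 / (2 * L)) * (\<Sum>k=1..n. mu k * (real k)\<^sup>2)
      \<le> c / N\<^sup>2 * (1/2 + 3 / (2 * L)) * ((\<Sum>k=1..k0. mu k * (real k)\<^sup>2)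
          + real n * ((1 + e) * b * ln (real n) powr \<alpha>))"
    using c L sum_mass_times_square_le[OF e b \<alpha> mu n(1)] by (intro mult_left_mono) auto
  moreover note quadratic_sum_tail_le_ln_powr[OF c _ N e b \<alpha> mu n(1,2) M, of L, folded Q_def]
  ultimately have "Lf mu gfun n \<le> c / N\<^sup>2 * (1/2 + 3 / (2 * L)) * ((\<Sum>k=1..k0. mu k * (real k)\<^sup>2)
          + real n * ((1 + e) * b * ln (real n) powr \<alpha>)) - c / N * (\<Sum>k=1..n. real k * mu k)
      + c * (3/2 * ((1 + e) * b * ln (real (M * n)) powr \<alpha>) * (ln (1 + real M))\<^sup>2 / (L * real n)
        - (1 - e) * b * ln (real n) powr \<alpha> * (log_tail_integral N (real n + 1)
          - log_tail_integral N (real (M * n) + 1) - 1 / (N * real n)))"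
    using L by linarith
  also have "\<dots> = - Phi mu n / (N * L * (ln L)\<^sup>2) + Lf_gfun_majorant b \<alpha> e M (\<Sum>k=1..k0. mu k * (real k)\<^sup>2) n"
    using n(2) L N(2)
    unfolding Lf_gfun_majorant_def Phi_def c_def L_def N_def
    by (simp add: field_simps power2_eq_square)
  finally show ?thesis unfolding L_def N_def by simp
qed

lemma log_tail_integral_1_1: "log_tail_integral 1 1 = 2 * ln 2"
  unfolding log_tail_integral_def by simp

lemma log_tail_integral_tendsto_0: "(log_tail_integral 1 \<longlongrightarrow> 0) at_top"
  unfolding log_tail_integral_def by real_asymp

lemma Lf_gfun_majorant_ratio_tendsto:
  assumes "b > 0" "\<alpha> > 0" "M \<ge> 1"
  shows "((\<lambda>n. Lf_gfun_majorant b \<alpha> e M K n / (b * ln (real n) powr (\<alpha> - 1) / (ln (ln (real n)))\<^sup>2))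
    \<longlongrightarrow> (1 + e) / 2 - (1 - e) * (log_tail_integral 1 1 - log_tail_integral 1 (real M))) at_top"
proof -
  define m where "m = real M"
  have "m > 0" unfolding m_def using assms by simp
  then have "((\<lambda>n. Lf_gfun_majorant b \<alpha> e M K n / (b * ln (real n) powr (\<alpha> - 1) / (ln (ln (real n)))\<^sup>2))
    \<longlongrightarrow> ((1 + e) * b / 2 - (1 - e) * b * (2 * ln 2 - (ln (1 + m) * inverse m + (ln (1 + m) - ln m)))) * inverse b) at_top"
    using assms unfolding Lf_gfun_majorant_def log_tail_integral_def of_nat_mult m_def[symmetric]
    by real_asymp
  moreover have "((1 + e) * b / 2 - (1 - e) * b * (2 * ln 2 - (ln (1 + m) * inverse m + (ln (1 + m) - ln m)))) * inverse b
      = (1 + e) / 2 - (1 - e) * (log_tail_integral 1 1 - log_tail_integral 1 m)"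
    using assms unfolding log_tail_integral_def by (simp add: field_simps)
  ultimately show ?thesis unfolding m_def by simp
qed

lemma asymp_equiv_eventually_between:
  fixes f g :: "'a \<Rightarrow> real"
  assumes "f \<sim>[F] g" "eventually (\<lambda>x. f x \<ge> 0) F" "eventually (\<lambda>x. g x \<ge> 0) F" "0 < e" "e < 1"
  shows "eventually (\<lambda>x. (1 - e) * g x \<le> f x \<and> f x \<le> (1 + e) * g x) F"
proof -
  have "eventually (\<lambda>x. norm (f x) \<le> (1 + e) * norm (g x)) F"
    using assms(4) by (intro asymp_equiv_imp_eventually_le[OF assms(1)]) simp
  moreover have "eventually (\<lambda>x. (1 - e) * norm (g x) \<le> norm (f x)) F"
    using assms(4,5) by (intro asymp_equiv_imp_eventually_ge[OF assms(1)]) simp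
  ultimately show ?thesis
    using assms(2,3) by eventually_elim auto
qed

lemma Lf_gfun_eventually_le_multiple:
  fixes mu :: "nat \<Rightarrow> real" and b \<alpha> e r :: real
  assumes fm: "finite_measure_Npos mu" and b: "b > 0" and \<alpha>: "\<alpha> > 0"
    and asy: "mu \<sim>[at_top] (\<lambda>n. b * ln (real n) powr \<alpha> / (real n)\<^sup>2)"
    and e: "0 < e" "e < 1" and M: "M \<ge> 1"
    and r: "(1 + e) / 2 - (1 - e) * (log_tail_integral 1 1 - log_tail_integral 1 (real M)) < r"
  shows "\<forall>\<^sub>F n in at_top. Lf mu gfun n
      + Phi mu n / ((real n + 10) * ln (real n + 10) * (ln (ln (real n + 10)))\<^sup>2)
    \<le> r * (b * ln (real n) powr (\<alpha> - 1) / (ln (ln (real n)))\<^sup>2)"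
proof -
  have "\<forall>\<^sub>F k in at_top. (1 - e) * (b * ln (real k) powr \<alpha> / (real k)\<^sup>2) \<le> mu k
      \<and> mu k \<le> (1 + e) * (b * ln (real k) powr \<alpha> / (real k)\<^sup>2)"
    using fm b e unfolding finite_measure_Npos_def
    by (intro asymp_equiv_eventually_between[OF asy] eventually_at_top_linorder[THEN iffD2]) auto
  then obtain k0 where k0: "\<And>k. k \<ge> k0 \<Longrightarrow> (1 - e) * (b * ln (real k) powr \<alpha> / (real k)\<^sup>2) \<le> mu k
      \<and> mu k \<le> (1 + e) * (b * ln (real k) powr \<alpha> / (real k)\<^sup>2)"
    unfolding eventually_at_top_linorder by blast
  define K where "K = (\<Sum>k=1..k0. mu k * (real k)\<^sup>2)"
  define T where "T n = b * ln (real n) powr (\<alpha> - 1) / (ln (ln (real n)))\<^sup>2" for n :: nat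
  have "\<forall>\<^sub>F n in at_top. Lf_gfun_majorant b \<alpha> e M K n / T n < r"
    unfolding T_def by (rule order_tendstoD(2)[OF Lf_gfun_majorant_ratio_tendsto[OF b \<alpha> M] r])
  moreover have "\<forall>\<^sub>F n in at_top. T n > 0" "\<forall>\<^sub>F n in at_top. exp (exp 1) \<le> real n + 10"
    unfolding T_def using b \<alpha> by real_asymp+
  moreover have "\<forall>\<^sub>F n in at_top. n \<ge> max k0 1" by (rule eventually_ge_at_top)
  ultimately show ?thesis
  proof eventually_elim
    case (elim n)
    have "Lf mu gfun n + Phi mu n / ((real n + 10) * ln (real n + 10) * (ln (ln (real n + 10)))\<^sup>2)
        \<le> Lf_gfun_majorant b \<alpha> e M K n"
      unfolding K_def using k0 e elim by (intro Lf_gfun_le_majorant[OF fm b \<alpha> _ _ M]) auto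
    also have "\<dots> \<le> r * T n"
      using elim by (simp add: pos_divide_less_eq)
    finally show ?case unfolding T_def .
  qed
qed

lemma majorant_limit_close_to_optimal:
  assumes \<delta>: "\<delta> > 0"
  obtains e M where "0 < e" "e < 1" "M \<ge> 1"
    "(1 + e) / 2 - (1 - e) * (log_tail_integral 1 1 - log_tail_integral 1 (real M)) < 1/2 - 2 * ln 2 + \<delta>"
proof -
  define e where "e = min (\<delta> / 10) (1/2)"
  have e: "0 < e" "e \<le> 1/2" "e \<le> \<delta> / 10" unfolding e_def using \<delta> by auto
  have "\<forall>\<^sub>F M in at_top. log_tail_integral 1 (real M) < \<delta> / 4"
    using filterlim_compose[OF log_tail_integral_tendsto_0 filterlim_real_sequentially] \<delta>
    by (intro order_tendstoD) auto
  then obtain M where M: "M \<ge> 1" "log_tail_integral 1 (real M) < \<delta> / 4"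
    unfolding eventually_at_top_linorder by (metis max.cobounded1 max.cobounded2)
  have "log_tail_integral 1 (real M) \<ge> 0"
    using M unfolding log_tail_integral_def by simp
  then have "(1 - e) * log_tail_integral 1 (real M) \<le> log_tail_integral 1 (real M)"
    using e by (intro mult_left_le_one_le) auto
  moreover have "e * ln 2 \<le> e * 1"
    using e ln_2_less_1 by (intro mult_left_mono) auto
  moreover have "(1 + e) / 2 - (1 - e) * (2 * ln 2 - log_tail_integral 1 (real M))
      = 1/2 - 2 * ln 2 + e / 2 + 2 * (e * ln 2) + (1 - e) * log_tail_integral 1 (real M)"
    by (simp add: algebra_simps)
  ultimately show ?thesis
    using that[of e M] e M unfolding log_tail_integral_1_1 by linarith
qed

lemma Lf_gfun_eventually_le:
  fixes mu :: "nat \<Rightarrow> real" and b \<alpha> \<epsilon> :: real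
  assumes fm: "finite_measure_Npos mu" and b: "b > 0" and \<alpha>: "\<alpha> > 0"
    and asy: "mu \<sim>[at_top] (\<lambda>n. b * ln (real n) powr \<alpha> / (real n)\<^sup>2)"
    and \<epsilon>: "\<epsilon> > 0"
  shows "\<forall>\<^sub>F n in at_top. Lf mu gfun n
      + Phi mu n / ((real n + 10) * ln (real n + 10) * (ln (ln (real n + 10)))\<^sup>2)
      + (2 * ln 2 - 1/2) * (b * ln (real n) powr (\<alpha> - 1) / (ln (ln (real n)))\<^sup>2)
    \<le> \<epsilon> * (ln (real n) powr (\<alpha> - 1) / (ln (ln (real n)))\<^sup>2)"
proof -
  have "\<epsilon> / b > 0" using \<epsilon> b by simp
  then obtain e M where "0 < e" "e < 1" "M \<ge> 1"
    "(1 + e) / 2 - (1 - e) * (log_tail_integral 1 1 - log_tail_integral 1 (real M)) < 1/2 - 2 * ln 2 + \<epsilon> / b"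
    by (rule majorant_limit_close_to_optimal)
  from Lf_gfun_eventually_le_multiple[OF fm b \<alpha> asy this]
  show ?thesis
  proof eventually_elim
    case (elim n)
    define X where "X = ln (real n) powr (\<alpha> - 1) / (ln (ln (real n)))\<^sup>2"
    have "(1/2 - 2 * ln 2 + \<epsilon> / b) * (b * X) = \<epsilon> * X - (2 * ln 2 - 1/2) * (b * X)"
      using b by (simp add: field_simps)
    with elim show ?case unfolding X_def by simp
  qed
qed

lemma max_0_in_smallo:
  fixes f g :: "'a \<Rightarrow> real"
  assumes "\<And>\<epsilon>. \<epsilon> > 0 \<Longrightarrow> \<forall>\<^sub>F x in F. f x \<le> \<epsilon> * g x"
  shows "(\<lambda>x. max 0 (f x)) \<in> o[F](g)"
proof (rule landau_o.smallI)
  fix c :: real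
  assume c: "c > 0"
  from assms[OF c] show "\<forall>\<^sub>F x in F. norm (max 0 (f x)) \<le> c * norm (g x)"
  proof eventually_elim
    case (elim x)
    have "c * g x \<le> c * norm (g x)" using c by (intro mult_left_mono) auto
    moreover have "0 \<le> c * norm (g x)" using c by simp
    ultimately show ?case using elim by simp
  qed
qed

theorem lemma5p2:
  fixes mu :: "nat \<Rightarrow> real" and b \<alpha> :: real
  assumes "finite_measure_Npos mu"
    and "b > 0" and "\<alpha> > 0"
    and "mu \<sim>[at_top] (\<lambda>n. b * ln (real n) powr \<alpha> / (real n)\<^sup>2)"
  shows "\<exists>e. e \<in> o(\<lambda>n. ln (real n) powr (\<alpha> - 1) / (ln (ln (real n)))\<^sup>2) \<and>
    (\<forall>\<^sub>F n in at_top. Lf mu gfun n \<le>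
        - Phi mu n / ((real n + 10) * ln (real n + 10) * (ln (ln (real n + 10)))\<^sup>2)
        - (2 * ln 2 - 1/2) * (b * ln (real n) powr (\<alpha> - 1) / (ln (ln (real n)))\<^sup>2)
        + e n)"
proof (intro exI conjI)
  let ?excess = "\<lambda>n. Lf mu gfun n
      + Phi mu n / ((real n + 10) * ln (real n + 10) * (ln (ln (real n + 10)))\<^sup>2)
      + (2 * ln 2 - 1/2) * (b * ln (real n) powr (\<alpha> - 1) / (ln (ln (real n)))\<^sup>2)"
  show "(\<lambda>n. max 0 (?excess n)) \<in> o(\<lambda>n. ln (real n) powr (\<alpha> - 1) / (ln (ln (real n)))\<^sup>2)"
    using Lf_gfun_eventually_le[OF assms] by (rule max_0_in_smallo)
  show "\<forall>\<^sub>F n in at_top. Lf mu gfun n \<le>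
      - Phi mu n / ((real n + 10) * ln (real n + 10) * (ln (ln (real n + 10)))\<^sup>2)
      - (2 * ln 2 - 1/2) * (b * ln (real n) powr (\<alpha> - 1) / (ln (ln (real n)))\<^sup>2)
      + max 0 (?excess n)"
    by (intro always_eventually allI) linarith
qed

end
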